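(* Fix $q\in(0,1]$ and $\delta\in(0,1)$. With probability at least $1-\delta/3$, for all $t\in[T]$ and $a\in[K]$ with $N_{t,a}\ge1$, $$\hat\mu^+_{t,a}-\hat\mu^-_{t,a}\ \le\ \frac{N_{t,a}-N_{t-d_a(q),a}}{N_{t,a}}+1-q+\sqrt{\frac{\log(3KT/\delta)}{2N_{t,a}}}.$$
   Context: Combinatorial semi-bandit with (possibly reward-dependent) delayed feedback: $K$ arms, horizon $T$; at each round $t$ the learner picks (based on the history of past choices and observed feedback) a vector $p_t\in[0,1]^K$ with $\sum_a p_{t,a}=L$ and a random set $A_t\subseteq[K]$, $|A_t|=L$, with $\Pr(a\in A_t\mid\text{history},p_t)=p_{t,a}$. Each arm $a$ has pairs $(R_{t,a},D_{t,a})$, $t\ge1$, with $R_{t,a}\in[0,1]$ and delay $D_{t,a}\in\{0,1,\dots\}\cup\{\infty\}$; for each arm the pairs are i.i.d. across rounds and independent of everything before round $t$. The feedback of arm $a\in A_s$ is observed at round $t$ iff $s+D_{s,a}<t$. $N_{t,a}=\sum_{s<t}\mathbb 1\{a\in A_s\}$ (with $N_{t,a}=0$ for $t\le1$, including nonpositive $t$), $M_{t,a}=\sum_{s<t}\mathbb 1\{a\in A_s,\ s+D_{s,a}<t\}$, $S_{t,a}=\sum_{s<t}R_{s,a}\mathbb 1\{a\in A_s,\ s+D_{s,a}<t\}$, $\hat\mu^+_{t,a}=\frac{S_{t,a}+(N_{t,a}-M_{t,a})}{N_{t,a}}$, $\hat\mu^-_{t,a}=\frac{S_{t,a}}{N_{t,a}}$.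 The $q$-quantile of arm $a$'s delay is $d_a(q)=\min\{\gamma\in\mathbb N:\Pr(D_{1,a}\le\gamma)\ge q\}$. *)

theory Defs
  imports "HOL-Probability.Probability"
begin

text \<open>Rounds are natural numbers t >= 1,
  arms are 1..K.  A t w is the set of arms played at round t (outcome w),
  R t a w the reward and D t a w the (possibly infinite) delay of arm a at round t.\<close>

text \<open>Number of plays of arm a before round t; t is an integer so that
  nonpositive indices t give 0.\<close>
definition Nplays :: "(nat \<Rightarrow> 'w \<Rightarrow> nat set) \<Rightarrow> int \<Rightarrow> nat \<Rightarrow> 'w \<Rightarrow> nat" where
  "Nplays A t a w = card {s::nat. 1 \<le> s \<and> int s < t \<and> a \<in> A s w}"

definition Mobs :: "(nat \<Rightarrow> 'w \<Rightarrow> nat set) \<Rightarrow> (nat \<Rightarrow> nat \<Rightarrow> 'w \<Rightarrow> enat)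
    \<Rightarrow> nat \<Rightarrow> nat \<Rightarrow> 'w \<Rightarrow> nat" where
  "Mobs A D t a w = card {s::nat. 1 \<le> s \<and> s < t \<and> a \<in> A s w \<and> enat s + D s a w < enat t}"

definition Sobs :: "(nat \<Rightarrow> 'w \<Rightarrow> nat set) \<Rightarrow> (nat \<Rightarrow> nat \<Rightarrow> 'w \<Rightarrow> real)
    \<Rightarrow> (nat \<Rightarrow> nat \<Rightarrow> 'w \<Rightarrow> enat) \<Rightarrow> nat \<Rightarrow> nat \<Rightarrow> 'w \<Rightarrow> real" where
  "Sobs A R D t a w =
     (\<Sum>s\<in>{s::nat. 1 \<le> s \<and> s < t \<and> a \<in> A s w \<and> enat s + D s a w < enat t}. R s a w)"

definition mu_plus :: "(nat \<Rightarrow> 'w \<Rightarrow> nat set) \<Rightarrow> (nat \<Rightarrow> nat \<Rightarrow> 'w \<Rightarrow> real)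
    \<Rightarrow> (nat \<Rightarrow> nat \<Rightarrow> 'w \<Rightarrow> enat) \<Rightarrow> nat \<Rightarrow> nat \<Rightarrow> 'w \<Rightarrow> real" where
  "mu_plus A R D t a w =
     (Sobs A R D t a w + (real (Nplays A (int t) a w) - real (Mobs A D t a w)))
       / real (Nplays A (int t) a w)"

definition mu_minus :: "(nat \<Rightarrow> 'w \<Rightarrow> nat set) \<Rightarrow> (nat \<Rightarrow> nat \<Rightarrow> 'w \<Rightarrow> real)
    \<Rightarrow> (nat \<Rightarrow> nat \<Rightarrow> 'w \<Rightarrow> enat) \<Rightarrow> nat \<Rightarrow> nat \<Rightarrow> 'w \<Rightarrow> real" where
  "mu_minus A R D t a w = Sobs A R D t a w / real (Nplays A (int t) a w)"

definition delay_quantile :: "'w measure \<Rightarrow> (nat \<Rightarrow> nat \<Rightarrow> 'w \<Rightarrow> enat) \<Rightarrow> nat \<Rightarrow> real \<Rightarrow> enat" where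
  "delay_quantile M D a q =
     (if \<exists>\<gamma>::nat. measure M {w \<in> space M. D 1 a w \<le> enat \<gamma>} \<ge> q
      then enat (LEAST \<gamma>::nat. measure M {w \<in> space M. D 1 a w \<le> enat \<gamma>} \<ge> q)
      else \<infinity>)"

definition Nplays_shift :: "(nat \<Rightarrow> 'w \<Rightarrow> nat set) \<Rightarrow> nat \<Rightarrow> enat \<Rightarrow> nat \<Rightarrow> 'w \<Rightarrow> nat" where
  "Nplays_shift A t d a w = (case d of enat k \<Rightarrow> Nplays A (int t - int k) a w | \<infinity> \<Rightarrow> 0)"

end

theory Submission
  imports Defs
begin

(* The gap mu_plus - mu_minus at round t is the fraction of the N_{t,a} plays of arm a whose
   feedback is still missing.  A play made before round t - d_a(q) can only be missing if its
   delay exceeds d_a(q), an event of probability at most 1 - q that is independent of the past.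
   So the bound can only fail if, among the first n plays of some arm, more than
   n (1 - q) + sqrt (n log(3KT/delta) / 2) have delay above the quantile.  Running a Hoeffding
   exponential supermartingale over exactly those plays and applying Markov's inequality bounds
   this by delta / (3KT) for each arm a and count n <= T; a union bound finishes the proof. *)

section \<open>Hoeffding's exponential supermartingale\<close>

lemma (in prob_space) indep_var_of_indep_set:
  assumes indep: "indep_set E E'"
    and X: "random_variable S X" and Y: "random_variable T Y"
    and X_E: "\<And>A. A \<in> sets S \<Longrightarrow> X -` A \<inter> space M \<in> E"
    and Y_E: "\<And>B. B \<in> sets T \<Longrightarrow> Y -` B \<inter> space M \<in> E'"
  shows "indep_var S X T Y"
  unfolding indep_var_def indep_vars_def2
proof (intro conjI)
  show "indep_sets (\<lambda>i. {case_bool X Y i -` A \<inter> space M |A. A \<in> sets (case_bool S T i)}) UNIV"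
    using indep unfolding indep_set_def
    by (rule indep_sets_mono_sets) (auto split: bool.split intro: X_E Y_E)
qed (use X Y in \<open>auto split: bool.split\<close>)

lemma (in prob_space) expectation_exp_hoeffding_le_1:
  fixes Y :: "'a \<Rightarrow> real" and p l :: real
  assumes Y: "random_variable borel Y" and Y_range: "\<And>w. w \<in> space M \<Longrightarrow> Y w \<in> {0..1}"
    and mean: "expectation Y \<le> p" and l: "0 < l"
  shows "expectation (\<lambda>w. exp (l * (Y w - p) - l\<^sup>2 / 8)) \<le> 1"
proof -
  interpret interval_bounded_random_variable M Y 0 1
    by unfold_locales (use Y Y_range in auto)
  have "(\<integral>\<^sup>+w. exp (l * (Y w - p) - l\<^sup>2 / 8) \<partial>M)
      \<le> (\<integral>\<^sup>+w. ennreal (exp (- l\<^sup>2 / 8)) * exp (l * (Y w - expectation Y)) \<partial>M)"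
  proof (rule nn_integral_mono)
    fix w
    have "l * (Y w - p) \<le> l * (Y w - expectation Y)"
      using mean l by (intro mult_left_mono) auto
    then show "ennreal (exp (l * (Y w - p) - l\<^sup>2 / 8))
        \<le> ennreal (exp (- l\<^sup>2 / 8)) * ennreal (exp (l * (Y w - expectation Y)))"
      by (simp flip: ennreal_mult exp_add)
  qed
  also have "\<dots> = ennreal (exp (- l\<^sup>2 / 8)) * (\<integral>\<^sup>+w. exp (l * (Y w - expectation Y)) \<partial>M)"
    by (rule nn_integral_cmult) simp
  also have "\<dots> \<le> ennreal (exp (- l\<^sup>2 / 8)) * ennreal (exp (l\<^sup>2 * (1 - 0)\<^sup>2 / 8))"
    by (intro mult_left_mono Hoeffdings_lemma_nn_integral l) simp
  also have "\<dots> = 1"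
    by (simp flip: ennreal_mult exp_add)
  finally show ?thesis
    by (subst integral_eq_nn_integral) (auto intro: enn2real_leI)
qed

definition hoeffding_process ::
    "(nat \<Rightarrow> 'a \<Rightarrow> real) \<Rightarrow> (nat \<Rightarrow> 'a \<Rightarrow> real) \<Rightarrow> real \<Rightarrow> real \<Rightarrow> nat \<Rightarrow> 'a \<Rightarrow> real" where
  "hoeffding_process B Y p l m w =
     exp (l * (\<Sum>s\<in>{1..<m}. B s w * (Y s w - p)) - l\<^sup>2 / 8 * (\<Sum>s\<in>{1..<m}. B s w))"

lemma hoeffding_process_trivial: "m \<le> 1 \<Longrightarrow> hoeffding_process B Y p l m w = 1"
  by (simp add: hoeffding_process_def)

lemma hoeffding_process_Suc:
  assumes "1 \<le> m" and "B m w = 0 \<or> B m w = 1"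
  shows "hoeffding_process B Y p l (Suc m) w = hoeffding_process B Y p l m w *
     (B m w * exp (l * (Y m w - p) - l\<^sup>2 / 8) + (1 - B m w))"
  using assms by (auto simp: hoeffding_process_def atLeastLessThanSuc algebra_simps
      simp flip: exp_add)

lemma hoeffding_process_le:
  assumes B: "\<And>s. B s w \<in> {0..1}" and Y: "\<And>s. 1 \<le> s \<Longrightarrow> Y s w \<le> 1"
    and "0 \<le> p" "0 \<le> l"
  shows "hoeffding_process B Y p l m w \<le> exp (l * real m)"
proof -
  have "(\<Sum>s\<in>{1..<m}. B s w * (Y s w - p)) \<le> (\<Sum>s\<in>{1..<m}. 1)"
  proof (intro sum_mono)
    fix s assume "s \<in> {1..<m}"
    then have "B s w * (Y s w - p) \<le> B s w * 1"
      using B Y[of s] \<open>0 \<le> p\<close> by (intro mult_left_mono) auto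
    then show "B s w * (Y s w - p) \<le> 1"
      using B[of s] by simp
  qed
  also have "\<dots> \<le> real m"
    by simp
  finally have "l * (\<Sum>s\<in>{1..<m}. B s w * (Y s w - p)) \<le> l * real m"
    using \<open>0 \<le> l\<close> by (rule mult_left_mono)
  moreover have "0 \<le> l\<^sup>2 / 8 * (\<Sum>s\<in>{1..<m}. B s w)"
    using B by (intro mult_nonneg_nonneg sum_nonneg) auto
  ultimately show ?thesis
    by (simp add: hoeffding_process_def)
qed

context prob_space
begin

context
  fixes F :: "nat \<Rightarrow> 'a measure" and B Y :: "nat \<Rightarrow> 'a \<Rightarrow> real" and p l :: real
  assumes F_space: "\<And>t. space (F t) = space M" and F_sets: "\<And>t. sets (F t) \<subseteq> sets M"
    and B_01: "\<And>s w. B s w = 0 \<or> B s w = 1"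
    and B_meas: "\<And>s t. 1 \<le> s \<Longrightarrow> s \<le> t \<Longrightarrow> B s \<in> borel_measurable (F t)"
    and Y_meas: "\<And>s t. 1 \<le> s \<Longrightarrow> s < t \<Longrightarrow> Y s \<in> borel_measurable (F t)"
    and Y_range: "\<And>s w. 1 \<le> s \<Longrightarrow> w \<in> space M \<Longrightarrow> Y s w \<in> {0..1}"
    and Y_mean: "\<And>s. 1 \<le> s \<Longrightarrow> expectation (Y s) \<le> p"
    and Y_indep: "\<And>s X. 1 \<le> s \<Longrightarrow> X \<in> borel_measurable (F s) \<Longrightarrow>
        indep_var borel X borel (Y s)"
    and p: "0 \<le> p" and l: "0 < l"
begin

private lemma measurable_F_M: "f \<in> borel_measurable (F t) \<Longrightarrow> f \<in> borel_measurable M"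
  using measurable_mono[of borel borel "F t" M] F_sets F_space by auto

private lemma integrable_bounded:
  "f \<in> borel_measurable M \<Longrightarrow> (\<And>w. w \<in> space M \<Longrightarrow> \<bar>f w\<bar> \<le> (c::real)) \<Longrightarrow>
    integrable M f"
  by (rule integrable_const_bound[where B=c]) auto

lemma hoeffding_process_measurable: "hoeffding_process B Y p l m \<in> borel_measurable (F m)"
  unfolding hoeffding_process_def using B_meas Y_meas by measurable

lemma abs_hoeffding_process_le:
  assumes "w \<in> space M"
  shows "\<bar>hoeffding_process B Y p l m w\<bar> \<le> exp (l * real m)"
proof -
  have "hoeffding_process B Y p l m w \<le> exp (l * real m)"
  proof (rule hoeffding_process_le)
    show "B s w \<in> {0..1}" for s
      using B_01[of s w] by auto
    show "Y s w \<le> 1" if "1 \<le> s" for s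
      using Y_range[OF that assms] by simp
  qed (use p l in auto)
  then show ?thesis
    by (simp add: hoeffding_process_def)
qed

lemma integrable_hoeffding_process: "integrable M (hoeffding_process B Y p l m)"
  using integrable_bounded[OF measurable_F_M[OF hoeffding_process_measurable] abs_hoeffding_process_le] .

private lemma Y_measurable: "1 \<le> s \<Longrightarrow> Y s \<in> borel_measurable M"
  using Y_meas[of s "Suc s"] by (auto intro: measurable_F_M)

private lemma integrable_exp_hoeffding:
  assumes s: "1 \<le> s"
  shows "integrable M (\<lambda>w. exp (l * (Y s w - p) - l\<^sup>2 / 8))"
proof (rule integrable_bounded)
  show "(\<lambda>w. exp (l * (Y s w - p) - l\<^sup>2 / 8)) \<in> borel_measurable M"
    using Y_measurable[OF s] by measurable
  show "\<bar>exp (l * (Y s w - p) - l\<^sup>2 / 8)\<bar> \<le> exp l" if "w \<in> space M" for w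
  proof -
    have "l * (Y s w - p) \<le> l * 1"
      using Y_range[OF s that] p l by (intro mult_left_mono) auto
    then have "l * (Y s w - p) - l\<^sup>2 / 8 \<le> l"
      using zero_le_power2[of l] by linarith
    then show ?thesis
      by simp
  qed
qed

private lemma integrable_hoeffding_process_mult:
  assumes m: "1 \<le> m"
  shows "integrable M (\<lambda>w. hoeffding_process B Y p l m w * B m w)"
proof (rule integrable_bounded)
  have "(\<lambda>w. hoeffding_process B Y p l m w * B m w) \<in> borel_measurable (F m)"
    using hoeffding_process_measurable B_meas[OF m order_refl] by measurable
  then show "(\<lambda>w. hoeffding_process B Y p l m w * B m w) \<in> borel_measurable M"
    by (rule measurable_F_M)
  show "\<bar>hoeffding_process B Y p l m w * B m w\<bar> \<le> exp (l * real m)" if "w \<in> space M" for w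
    using abs_hoeffding_process_le[OF that, of m] B_01[of m w] by auto
qed

text \<open>The supermartingale step: on rounds with B m = 1 the factor contributed by Y m is
  independent of the past and has mean at most 1 by Hoeffding's lemma.\<close>
lemma expectation_hoeffding_process_Suc_le:
  assumes m: "1 \<le> m"
  shows "expectation (hoeffding_process B Y p l (Suc m)) \<le> expectation (hoeffding_process B Y p l m)"
proof -
  let ?G = "hoeffding_process B Y p l m" and ?b = "B m"
  let ?H = "\<lambda>w. exp (l * (Y m w - p) - l\<^sup>2 / 8)"
  note int_Gb = integrable_hoeffding_process_mult[OF m]
  note int_H = integrable_exp_hoeffding[OF m]
  have int_G1b: "integrable M (\<lambda>w. ?G w * (1 - ?b w))"
    using Bochner_Integration.integrable_diff[OF integrable_hoeffding_process int_Gb]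
    by (simp add: algebra_simps)
  have Gb_F: "(\<lambda>w. ?G w * ?b w) \<in> borel_measurable (F m)"
    using hoeffding_process_measurable B_meas[OF m order_refl] by measurable
  have indep: "indep_var borel (\<lambda>w. ?G w * ?b w) borel ?H"
    using indep_var_compose[OF Y_indep[OF m Gb_F], of "\<lambda>x. x" borel
        "\<lambda>y. exp (l * (y - p) - l\<^sup>2 / 8)" borel]
    by (simp add: comp_def)
  have "hoeffding_process B Y p l (Suc m) = (\<lambda>w. ?G w * ?b w * ?H w + ?G w * (1 - ?b w))"
    using hoeffding_process_Suc[where B=B, OF m B_01] by (simp add: fun_eq_iff algebra_simps)
  then have "expectation (hoeffding_process B Y p l (Suc m))
      = expectation (\<lambda>w. ?G w * ?b w) * expectation ?H + expectation (\<lambda>w. ?G w * (1 - ?b w))"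
    using Bochner_Integration.integral_add[OF indep_var_integrable[OF indep int_Gb int_H] int_G1b]
    by (simp add: indep_var_lebesgue_integral[OF indep int_Gb int_H])
  also have "\<dots> \<le> expectation (\<lambda>w. ?G w * ?b w) + expectation (\<lambda>w. ?G w * (1 - ?b w))"
  proof -
    have "0 \<le> ?G w * ?b w" for w
      using B_01[of m w] by (auto simp: hoeffding_process_def)
    then have "0 \<le> expectation (\<lambda>w. ?G w * ?b w)"
      by (intro integral_nonneg_AE AE_I2)
    moreover have "expectation ?H \<le> 1"
      by (rule expectation_exp_hoeffding_le_1[OF Y_measurable[OF m] Y_range[OF m] Y_mean[OF m] l])
    ultimately show ?thesis
      by (simp add: mult_left_le)
  qed
  also have "\<dots> = expectation ?G"
    by (subst Bochner_Integration.integral_add[symmetric, OF int_Gb int_G1b]) (simp add: algebra_simps)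
  finally show ?thesis .
qed

lemma expectation_hoeffding_process_le_1: "expectation (hoeffding_process B Y p l m) \<le> 1"
proof (induction m)
  case (Suc m)
  show ?case
  proof (cases "m = 0")
    case False
    then show ?thesis
      using expectation_hoeffding_process_Suc_le[of m] Suc.IH by simp
  qed (simp add: hoeffding_process_trivial prob_space)
qed (simp add: hoeffding_process_trivial prob_space)

lemma prob_hoeffding_process_ge_le:
  "prob {w \<in> space M. exp c \<le> hoeffding_process B Y p l m w} \<le> exp (- c)"
proof -
  have "prob {w \<in> space M. exp c \<le> hoeffding_process B Y p l m w}
      \<le> expectation (hoeffding_process B Y p l m) / exp c"
    by (rule integral_Markov_inequality_measure[OF integrable_hoeffding_process sets.top])
       (auto simp: hoeffding_process_def)
  also have "\<dots> \<le> 1 / exp c"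
    using expectation_hoeffding_process_le_1 by (intro divide_right_mono) auto
  finally show ?thesis
    by (simp add: exp_minus inverse_eq_divide)
qed

end

end

section \<open>Counting plays and observations\<close>

lemma Nplays_eq_sum: "real (Nplays A i a w) = (\<Sum>s\<in>{1..<nat i}. of_bool (a \<in> A s w))"
proof -
  have "{s. 1 \<le> s \<and> int s < i \<and> a \<in> A s w} = {1..<nat i} \<inter> {s. a \<in> A s w}"
    by auto
  then show ?thesis
    by (simp add: Nplays_def)
qed

lemma Mobs_eq_sum:
  "real (Mobs A D t a w) = (\<Sum>s\<in>{1..<t}. of_bool (a \<in> A s w \<and> enat s + D s a w < enat t))"
proof -
  have "{s. 1 \<le> s \<and> s < t \<and> a \<in> A s w \<and> enat s + D s a w < enat t}
      = {1..<t} \<inter> {s. a \<in> A s w \<and> enat s + D s a w < enat t}"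
    by auto
  then show ?thesis
    by (simp add: Mobs_def)
qed

lemma mu_plus_minus_mu_minus:
  "mu_plus A R D t a w - mu_minus A R D t a w
     = (real (Nplays A (int t) a w) - real (Mobs A D t a w)) / real (Nplays A (int t) a w)"
  unfolding mu_plus_def mu_minus_def by (simp add: diff_divide_distrib[symmetric])

lemma Nplays_mono: "i \<le> j \<Longrightarrow> Nplays A i a w \<le> Nplays A j a w"
  unfolding Nplays_def by (intro card_mono) (auto intro: finite_subset[of _ "{..<nat j}"])

lemma Nplays_le: "Nplays A i a w \<le> nat i"
proof -
  have "Nplays A i a w \<le> card {1..<nat i}"
    unfolding Nplays_def by (intro card_mono) auto
  then show ?thesis
    by simp
qed

lemma Nplays_less_Nplays:
  assumes "a \<in> A s w" "1 \<le> s" "int s < i"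
  shows "Nplays A (int s) a w < Nplays A i a w"
  unfolding Nplays_def
proof (rule psubset_card_mono)
  show "finite {r. 1 \<le> r \<and> int r < i \<and> a \<in> A r w}"
    by (rule finite_subset[of _ "{..<nat i}"]) auto
  show "{r. 1 \<le> r \<and> int r < int s \<and> a \<in> A r w} \<subset> {r. 1 \<le> r \<and> int r < i \<and> a \<in> A r w}"
    using assms by auto
qed

text \<open>Whether round s is among the first n plays of arm a is decided before round s; this
  predictability lets a Hoeffding process run over exactly those n plays.\<close>
definition first_plays :: "(nat \<Rightarrow> 'w \<Rightarrow> nat set) \<Rightarrow> nat \<Rightarrow> nat \<Rightarrow> nat \<Rightarrow> 'w \<Rightarrow> real" where
  "first_plays A a n s w = of_bool (a \<in> A s w \<and> Nplays A (int s) a w < n)"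

definition delay_exceeds :: "(nat \<Rightarrow> nat \<Rightarrow> 'w \<Rightarrow> enat) \<Rightarrow> nat \<Rightarrow> nat \<Rightarrow> nat \<Rightarrow> 'w \<Rightarrow> real" where
  "delay_exceeds D a k s w = of_bool (enat k < D s a w)"

lemma sum_first_plays_le: "(\<Sum>s\<in>{1..<m}. first_plays A a n s w) \<le> real n"
proof -
  let ?S = "{1..<m} \<inter> {s. a \<in> A s w \<and> Nplays A (int s) a w < n}"
  have "inj_on (\<lambda>s. Nplays A (int s) a w) ?S"
  proof (rule linorder_inj_onI')
    fix s s' assume "s \<in> ?S" "s' \<in> ?S" "s < s'"
    then show "Nplays A (int s) a w \<noteq> Nplays A (int s') a w"
      using Nplays_less_Nplays[of a A s w "int s'"] by auto
  qed
  then have "card ?S \<le> card {..<n}"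
    by (rule card_inj_on_le) auto
  then show ?thesis
    by (simp add: first_plays_def)
qed

lemma card_late_plays_le:
  fixes A :: "nat \<Rightarrow> 'w \<Rightarrow> nat set" and D :: "nat \<Rightarrow> nat \<Rightarrow> 'w \<Rightarrow> enat"
    and a k t T :: nat and w :: 'w
  assumes "t \<le> T"
  defines "n \<equiv> Nplays A (int t - int k) a w"
  shows "real (card {s. 1 \<le> s \<and> int s < int t - int k \<and> a \<in> A s w \<and> enat k < D s a w})
    \<le> (\<Sum>s\<in>{1..<Suc T}. first_plays A a n s w * delay_exceeds D a k s w)"
    (is "real (card ?U) \<le> _")
proof -
  have "first_plays A a n s w * delay_exceeds D a k s w = 1" if "s \<in> ?U" for s
    using that Nplays_less_Nplays[of a A s w "int t - int k"]
    by (auto simp: n_def first_plays_def delay_exceeds_def)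
  then have "real (card ?U) = (\<Sum>s\<in>?U. first_plays A a n s w * delay_exceeds D a k s w)"
    by simp
  also have "\<dots> \<le> (\<Sum>s\<in>{1..<Suc T}. first_plays A a n s w * delay_exceeds D a k s w)"
  proof (rule sum_mono2)
    show "?U \<subseteq> {1..<Suc T}"
      using assms(1) by auto
    show "0 \<le> first_plays A a n s w * delay_exceeds D a k s w" for s
      by (simp add: first_plays_def delay_exceeds_def)
  qed simp
  finally show ?thesis .
qed

text \<open>A play made before round t - k is either observed by round t or has delay above k.\<close>
lemma Nplays_shift_le_observed_plus_late:
  fixes A :: "nat \<Rightarrow> 'w \<Rightarrow> nat set" and D :: "nat \<Rightarrow> nat \<Rightarrow> 'w \<Rightarrow> enat"
    and a k t T :: nat and w :: 'w
  assumes "t \<le> T"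
  defines "n \<equiv> Nplays A (int t - int k) a w"
  shows "real n \<le> real (Mobs A D t a w)
      + (\<Sum>s\<in>{1..<Suc T}. first_plays A a n s w * delay_exceeds D a k s w)"
proof -
  let ?P = "{s. 1 \<le> s \<and> int s < int t - int k \<and> a \<in> A s w}"
  let ?U = "{s. 1 \<le> s \<and> int s < int t - int k \<and> a \<in> A s w \<and> enat k < D s a w}"
  let ?O = "{s. 1 \<le> s \<and> s < t \<and> a \<in> A s w \<and> enat s + D s a w < enat t}"
  have "?P \<subseteq> ?O \<union> ?U"
  proof
    fix s assume s: "s \<in> ?P"
    show "s \<in> ?O \<union> ?U"
    proof (cases "enat k < D s a w")
      case False
      then obtain j where "D s a w = enat j" "j \<le> k"
        by (cases "D s a w") auto
      then show ?thesis
        using s by auto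
    qed (use s in auto)
  qed
  moreover have "finite ?O" "finite ?U"
    by (auto intro: finite_subset[of _ "{..<t}"])
  ultimately have "n \<le> card (?O \<union> ?U)"
    unfolding n_def Nplays_def by (intro card_mono) auto
  also have "\<dots> \<le> card ?O + card ?U"
    by (rule card_Un_le)
  finally have "real n \<le> real (card ?O) + real (card ?U)"
    by simp
  moreover have "real (card ?U) \<le> (\<Sum>s\<in>{1..<Suc T}. first_plays A a n s w * delay_exceeds D a k s w)"
    unfolding n_def by (rule card_late_plays_le[OF assms(1)])
  ultimately show ?thesis
    unfolding Mobs_def by linarith
qed

lemma late_plays_gt_of_gap_violation:
  fixes N n Mo X L q :: real
  assumes N: "0 < N" and n: "0 \<le> n" "n \<le> N" and q: "q \<le> 1" and L: "0 \<le> L"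
    and observed: "n \<le> Mo + X"
    and violation: "(N - n) / N + 1 - q + sqrt (L / (2 * N)) < (N - Mo) / N"
  shows "n * (1 - q) + sqrt (n * L / 2) < X"
proof -
  have "N * ((N - n) / N + (1 - q) + sqrt (L / (2 * N))) < N * ((N - Mo) / N)"
    using violation N by (intro mult_strict_left_mono) auto
  then have "N - n + N * (1 - q) + N * sqrt (L / (2 * N)) < N - Mo"
    using N by (simp add: distrib_left)
  moreover have "N * sqrt (L / (2 * N)) = sqrt (N * L / 2)"
  proof -
    have "N * sqrt (L / (2 * N)) = sqrt (N\<^sup>2 * (L / (2 * N)))"
      using N by (simp only: real_sqrt_mult real_sqrt_abs)
    also have "N\<^sup>2 * (L / (2 * N)) = N * L / 2"
      using N by (simp add: power2_eq_square)
    finally show ?thesis .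
  qed
  moreover have "sqrt (n * L / 2) \<le> sqrt (N * L / 2)"
    using n L by (intro real_sqrt_le_mono divide_right_mono mult_right_mono) auto
  moreover have "n * (1 - q) \<le> N * (1 - q)"
    using n q by (intro mult_right_mono) auto
  ultimately show ?thesis
    using observed by linarith
qed

lemma hoeffding_exponent_ge:
  fixes n L S C p :: real
  assumes n: "0 < n" and L: "0 < L" and p: "0 \<le> p" and C: "0 \<le> C" "C \<le> n"
    and S: "n * p + sqrt (n * L / 2) < S"
  defines "l \<equiv> sqrt (8 * L / n)"
  shows "L \<le> l * (S - p * C) - l\<^sup>2 / 8 * C"
proof -
  have l2: "l\<^sup>2 = 8 * L / n"
    unfolding l_def using n L by simp
  have "l * sqrt (n * L / 2) = sqrt ((2 * L)\<^sup>2)"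
    unfolding l_def real_sqrt_mult[symmetric] using n by (simp add: field_simps power2_eq_square)
  also have "\<dots> = 2 * L"
    using L by (simp only: real_sqrt_abs)
  finally have "l * sqrt (n * L / 2) = 2 * L" .
  moreover have "l * sqrt (n * L / 2) \<le> l * (S - p * C)"
  proof (rule mult_left_mono)
    have "p * C \<le> p * n"
      using p C by (intro mult_left_mono) auto
    then show "sqrt (n * L / 2) \<le> S - p * C"
      using S by (simp add: mult.commute)
  qed (use n L in \<open>simp add: l_def\<close>)
  moreover have "l\<^sup>2 / 8 * C \<le> l\<^sup>2 / 8 * n"
    using C by (intro mult_left_mono) auto
  moreover have "l\<^sup>2 / 8 * n = L"
    using l2 n by simp
  ultimately show ?thesis
    by linarith
qed

definition gap_bounded :: "(nat \<Rightarrow> 'w \<Rightarrow> nat set) \<Rightarrow> (nat \<Rightarrow> nat \<Rightarrow> 'w \<Rightarrow> real)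
    \<Rightarrow> (nat \<Rightarrow> nat \<Rightarrow> 'w \<Rightarrow> enat) \<Rightarrow> enat \<Rightarrow> real \<Rightarrow> real \<Rightarrow> nat \<Rightarrow> nat \<Rightarrow> 'w \<Rightarrow> bool" where
  "gap_bounded A R D d q L t a w \<longleftrightarrow>
     (1 \<le> Nplays A (int t) a w \<longrightarrow>
       mu_plus A R D t a w - mu_minus A R D t a w
       \<le> (real (Nplays A (int t) a w) - real (Nplays_shift A t d a w)) / real (Nplays A (int t) a w)
         + 1 - q + sqrt (L / (2 * real (Nplays A (int t) a w))))"

lemma gap_bounded_infinity:
  assumes q: "q \<le> 1" and L: "0 \<le> L"
  shows "gap_bounded A R D \<infinity> q L t a w"
  unfolding gap_bounded_def mu_plus_minus_mu_minus
proof
  let ?N = "real (Nplays A (int t) a w)"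
  assume "1 \<le> Nplays A (int t) a w"
  then have N: "0 < ?N"
    by simp
  have "(?N - real (Mobs A D t a w)) / ?N \<le> 1"
    using N by (simp add: divide_le_eq)
  moreover have "(?N - real (Nplays_shift A t \<infinity> a w)) / ?N = 1"
    using N by (simp add: Nplays_shift_def)
  moreover have "0 \<le> sqrt (L / (2 * ?N))"
    using L N by simp
  ultimately show "(?N - real (Mobs A D t a w)) / ?N
      \<le> (?N - real (Nplays_shift A t \<infinity> a w)) / ?N + 1 - q + sqrt (L / (2 * ?N))"
    using q by linarith
qed

lemma many_late_plays_of_gap_violation:
  fixes A :: "nat \<Rightarrow> 'w \<Rightarrow> nat set" and D :: "nat \<Rightarrow> nat \<Rightarrow> 'w \<Rightarrow> enat"
    and a k t T :: nat and w :: 'w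
  assumes t: "t \<le> T" and q: "q \<le> 1" and L: "0 \<le> L"
    and violation: "\<not> gap_bounded A R D (enat k) q L t a w"
  defines "n \<equiv> Nplays A (int t - int k) a w"
  shows "real n * (1 - q) + sqrt (real n * L / 2)
    < (\<Sum>s\<in>{1..<Suc T}. first_plays A a n s w * delay_exceeds D a k s w)"
proof -
  let ?N = "Nplays A (int t) a w"
  have N: "1 \<le> ?N" and gap: "(real ?N - real n) / real ?N + 1 - q + sqrt (L / (2 * real ?N))
      < (real ?N - real (Mobs A D t a w)) / real ?N"
    using violation by (auto simp: gap_bounded_def mu_plus_minus_mu_minus Nplays_shift_def n_def)
  show ?thesis
  proof (rule late_plays_gt_of_gap_violation[OF _ _ _ q L _ gap])
    show "real n \<le> real (Mobs A D t a w)
        + (\<Sum>s\<in>{1..<Suc T}. first_plays A a n s w * delay_exceeds D a k s w)"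
      unfolding n_def by (rule Nplays_shift_le_observed_plus_late[OF t])
    show "real n \<le> real ?N"
      unfolding n_def by (simp add: Nplays_mono)
  qed (use N in auto)
qed

lemma hoeffding_process_large_of_gap_violation:
  assumes t: "t \<le> T" and q: "q \<le> 1" and L: "0 < L"
    and violation: "\<not> gap_bounded A R D d q L t a w"
  shows "\<exists>k n. d = enat k \<and> n \<in> {1..T} \<and>
    exp L \<le> hoeffding_process (first_plays A a n) (delay_exceeds D a k) (1 - q)
               (sqrt (8 * L / real n)) (Suc T) w"
proof (cases d)
  case infinity
  have "gap_bounded A R D \<infinity> q L t a w"
    using q L by (intro gap_bounded_infinity) auto
  with infinity violation show ?thesis
    by simp
next
  case (enat k)
  define n where "n = Nplays A (int t - int k) a w"
  define S where "S = (\<Sum>s\<in>{1..<Suc T}. first_plays A a n s w * delay_exceeds D a k s w)"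
  define C where "C = (\<Sum>s\<in>{1..<Suc T}. first_plays A a n s w)"
  have late: "real n * (1 - q) + sqrt (real n * L / 2) < S"
    unfolding n_def S_def using many_late_plays_of_gap_violation[OF t q _ violation[unfolded enat]] L
    by simp
  have "1 \<le> n"
  proof (rule ccontr)
    assume "\<not> 1 \<le> n"
    then have "n = 0"
      by simp
    with late show False
      by (simp add: S_def first_plays_def)
  qed
  moreover have "n \<le> T"
    using Nplays_le[of A "int t - int k" a w] t by (simp add: n_def)
  moreover have "L \<le> sqrt (8 * L / real n) * (S - (1 - q) * C) - (sqrt (8 * L / real n))\<^sup>2 / 8 * C"
  proof (rule hoeffding_exponent_ge)
    show "C \<le> real n"
      unfolding C_def by (rule sum_first_plays_le)
    show "0 \<le> C"
      unfolding C_def by (intro sum_nonneg) (simp add: first_plays_def)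
  qed (use \<open>1 \<le> n\<close> L q late in \<open>auto simp: mult.commute\<close>)
  moreover have "S - (1 - q) * C
      = (\<Sum>s\<in>{1..<Suc T}. first_plays A a n s w * (delay_exceeds D a k s w - (1 - q)))"
    unfolding S_def C_def sum_distrib_left sum_subtractf[symmetric] by (simp add: algebra_simps)
  ultimately show ?thesis
    using enat by (auto simp: hoeffding_process_def C_def)
qed

locale delayed_feedback_bandit = prob_space M for M :: "'w measure" +
  fixes F :: "nat \<Rightarrow> 'w measure"
    and A :: "nat \<Rightarrow> 'w \<Rightarrow> nat set"
    and R :: "nat \<Rightarrow> nat \<Rightarrow> 'w \<Rightarrow> real"
    and D :: "nat \<Rightarrow> nat \<Rightarrow> 'w \<Rightarrow> enat"
  assumes F_space: "\<And>t. space (F t) = space M"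
    and F_sets: "\<And>t. sets (F t) \<subseteq> sets M"
    and F_mono: "\<And>s t. s \<le> t \<Longrightarrow> sets (F s) \<subseteq> sets (F t)"
    and A_meas: "\<And>t a. 1 \<le> t \<Longrightarrow> {w \<in> space M. a \<in> A t w} \<in> sets (F t)"
    and RD_meas: "\<And>s t a. 1 \<le> s \<Longrightarrow> s < t \<Longrightarrow>
        (\<lambda>w. (R s a w, D s a w)) \<in> measurable (F t) (borel \<Otimes>\<^sub>M count_space UNIV)"
    and RD_meas_M: "\<And>t a. 1 \<le> t \<Longrightarrow>
        (\<lambda>w. (R t a w, D t a w)) \<in> measurable M (borel \<Otimes>\<^sub>M count_space UNIV)"
    and RD_indep: "\<And>t a. 1 \<le> t \<Longrightarrow>
        indep_set (sets (F t))
          (sets (vimage_algebra (space M) (\<lambda>w. (R t a w, D t a w))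
                   (borel \<Otimes>\<^sub>M count_space UNIV)))"
    and RD_ident: "\<And>t a. 1 \<le> t \<Longrightarrow>
        distr M (borel \<Otimes>\<^sub>M count_space UNIV) (\<lambda>w. (R t a w, D t a w))
        = distr M (borel \<Otimes>\<^sub>M count_space UNIV) (\<lambda>w. (R 1 a w, D 1 a w))"
begin

lemma measurable_F_M: "f \<in> measurable (F t) N \<Longrightarrow> f \<in> measurable M N"
  using measurable_mono[of N N "F t" M] F_sets F_space by auto

lemma pred_played: "1 \<le> s \<Longrightarrow> s \<le> t \<Longrightarrow> Measurable.pred (F t) (\<lambda>w. a \<in> A s w)"
  using A_meas[of s a] F_mono[of s t] F_space[of t] by (auto simp: pred_def)

lemma delay_measurable: "1 \<le> s \<Longrightarrow> s < t \<Longrightarrow> (\<lambda>w. D s a w) \<in> measurable (F t) (count_space UNIV)"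
  using measurable_compose[OF RD_meas measurable_snd] by simp

lemma Nplays_measurable: "i \<le> int t \<Longrightarrow> (\<lambda>w. real (Nplays A i a w)) \<in> borel_measurable (F t)"
  unfolding Nplays_eq_sum using pred_played by measurable auto

lemma Mobs_measurable: "(\<lambda>w. real (Mobs A D t a w)) \<in> borel_measurable (F t)"
  unfolding Mobs_eq_sum using pred_played delay_measurable by measurable auto

lemma first_plays_measurable: "1 \<le> s \<Longrightarrow> s \<le> t \<Longrightarrow> first_plays A a n s \<in> borel_measurable (F t)"
  unfolding first_plays_def of_nat_less_iff[where 'a=real, symmetric]
  using pred_played Nplays_measurable by measurable

lemma delay_exceeds_measurable: "1 \<le> s \<Longrightarrow> s < t \<Longrightarrow> delay_exceeds D a k s \<in> borel_measurable (F t)"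
  unfolding delay_exceeds_def using delay_measurable by measurable

lemma delay_exceeds_indep:
  assumes s: "1 \<le> s" and X: "X \<in> borel_measurable (F s)"
  shows "indep_var borel X borel (delay_exceeds D a k s)"
proof (rule indep_var_of_indep_set[OF RD_indep[OF s, of a]])
  let ?h = "\<lambda>x :: real \<times> enat. of_bool (enat k < snd x) :: real"
  have h: "?h \<in> borel_measurable (borel \<Otimes>\<^sub>M count_space UNIV)"
    by measurable
  have eq: "delay_exceeds D a k s = ?h \<circ> (\<lambda>w. (R s a w, D s a w))"
    by (simp add: fun_eq_iff delay_exceeds_def)
  show "random_variable borel X"
    using X by (rule measurable_F_M)
  show "random_variable borel (delay_exceeds D a k s)"
    unfolding eq using RD_meas_M[OF s] h by measurable
  show "X -` B \<inter> space M \<in> sets (F s)" if "B \<in> sets borel" for B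
    using measurable_sets[OF X that] F_space by simp
  show "delay_exceeds D a k s -` B \<inter> space M
      \<in> sets (vimage_algebra (space M) (\<lambda>w. (R s a w, D s a w)) (borel \<Otimes>\<^sub>M count_space UNIV))"
    if "B \<in> sets borel" for B
  proof -
    have "delay_exceeds D a k s -` B \<inter> space M
        = (\<lambda>w. (R s a w, D s a w)) -` (?h -` B \<inter> space (borel \<Otimes>\<^sub>M count_space UNIV)) \<inter> space M"
      by (auto simp: eq space_pair_measure)
    then show ?thesis
      by (simp only:) (rule in_vimage_algebra[OF measurable_sets[OF h that]])
  qed
qed

lemma delay_event_in_events: "1 \<le> s \<Longrightarrow> {w \<in> space M. P (D s a w)} \<in> events"
  using measurable_F_M[OF delay_measurable[of s "Suc s" a]] by measurable

lemma prob_delay_event_eq: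
  assumes s: "1 \<le> s"
  shows "prob {w \<in> space M. P (D s a w)} = prob {w \<in> space M. P (D 1 a w)}"
proof -
  let ?P = "borel \<Otimes>\<^sub>M count_space UNIV :: (real \<times> enat) measure"
  have event: "{x \<in> space ?P. P (snd x)} \<in> sets ?P"
    by measurable
  have "prob {w \<in> space M. P (D r a w)} = measure (distr M ?P (\<lambda>w. (R r a w, D r a w))) {x \<in> space ?P. P (snd x)}"
    if "1 \<le> r" for r
    using measure_distr[OF RD_meas_M[OF that] event]
    by (simp add: vimage_def space_pair_measure Int_def conj_commute)
  then show ?thesis
    using s RD_ident[OF s, of a] by simp
qed

lemma expectation_delay_exceeds:
  assumes s: "1 \<le> s"
  shows "expectation (delay_exceeds D a k s) = prob {w \<in> space M. enat k < D s a w}"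
proof -
  have "expectation (delay_exceeds D a k s) = expectation (indicator {w \<in> space M. enat k < D s a w})"
    by (intro Bochner_Integration.integral_cong) (auto simp: delay_exceeds_def)
  then show ?thesis
    using delay_event_in_events[OF s] by simp
qed

lemma prob_delay_le_quantile:
  assumes "delay_quantile M D a q = enat k"
  shows "q \<le> prob {w \<in> space M. D 1 a w \<le> enat k}"
proof -
  have "\<exists>\<gamma>::nat. q \<le> prob {w \<in> space M. D 1 a w \<le> enat \<gamma>}"
    using assms unfolding delay_quantile_def by (auto split: if_splits)
  then show ?thesis
    using assms unfolding delay_quantile_def by (auto intro: LeastI_ex)
qed

lemma expectation_delay_exceeds_le:
  assumes k: "delay_quantile M D a q = enat k" and s: "1 \<le> s"
  shows "expectation (delay_exceeds D a k s) \<le> 1 - q"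
proof -
  have "space M - {w \<in> space M. D 1 a w \<le> enat k} = {w \<in> space M. enat k < D 1 a w}"
    by auto
  then have "prob {w \<in> space M. enat k < D 1 a w} = 1 - prob {w \<in> space M. D 1 a w \<le> enat k}"
    using prob_compl[OF delay_event_in_events[of 1 "\<lambda>x. x \<le> enat k" a]] by simp
  then show ?thesis
    using expectation_delay_exceeds[OF s] prob_delay_event_eq[OF s] prob_delay_le_quantile[OF k]
    by simp
qed

definition hoeffding_event :: "real \<Rightarrow> real \<Rightarrow> nat \<Rightarrow> nat \<Rightarrow> nat \<Rightarrow> 'w set" where
  "hoeffding_event q L T a n = {w \<in> space M. \<exists>k. delay_quantile M D a q = enat k \<and>
     exp L \<le> hoeffding_process (first_plays A a n) (delay_exceeds D a k) (1 - q)
               (sqrt (8 * L / real n)) (Suc T) w}"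

lemma hoeffding_event_enat:
  "delay_quantile M D a q = enat k \<Longrightarrow> hoeffding_event q L T a n = {w \<in> space M.
     exp L \<le> hoeffding_process (first_plays A a n) (delay_exceeds D a k) (1 - q)
               (sqrt (8 * L / real n)) (Suc T) w}"
  by (simp add: hoeffding_event_def)

lemma hoeffding_event_infinity: "delay_quantile M D a q = \<infinity> \<Longrightarrow> hoeffding_event q L T a n = {}"
  by (simp add: hoeffding_event_def)

lemma hoeffding_event_in_events: "hoeffding_event q L T a n \<in> events"
proof (cases "delay_quantile M D a q")
  case (enat k)
  have "hoeffding_process (first_plays A a n) (delay_exceeds D a k) (1 - q) (sqrt (8 * L / real n)) (Suc T)
      \<in> borel_measurable (F (Suc T))"
    unfolding hoeffding_process_def using first_plays_measurable delay_exceeds_measurable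
    by measurable
  then have "hoeffding_process (first_plays A a n) (delay_exceeds D a k) (1 - q) (sqrt (8 * L / real n))
      (Suc T) \<in> borel_measurable M"
    by (rule measurable_F_M)
  then show ?thesis
    unfolding hoeffding_event_enat[OF enat] by measurable
qed (simp add: hoeffding_event_infinity)

lemma prob_hoeffding_event_le:
  assumes q: "q \<le> 1" and L: "0 < L" and n: "1 \<le> n"
  shows "prob (hoeffding_event q L T a n) \<le> exp (- L)"
proof (cases "delay_quantile M D a q")
  case (enat k)
  show ?thesis
    unfolding hoeffding_event_enat[OF enat]
  proof (rule prob_hoeffding_process_ge_le[OF F_space F_sets])
    show "first_plays A a n s w = 0 \<or> first_plays A a n s w = 1" for s w
      by (simp add: first_plays_def)
    show "delay_exceeds D a k s w \<in> {0..1}" for s w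
      by (simp add: delay_exceeds_def)
  qed (use first_plays_measurable delay_exceeds_measurable delay_exceeds_indep
         expectation_delay_exceeds_le[OF enat] q L n in auto)
qed (simp add: hoeffding_event_infinity)

lemma gap_bounded_in_events: "{w \<in> space M. gap_bounded A R D d q L t a w} \<in> events"
proof -
  have "(\<lambda>w. real (Nplays_shift A t d a w)) \<in> borel_measurable (F t)"
    by (cases d) (auto simp: Nplays_shift_def intro: Nplays_measurable)
  then have "Measurable.pred (F t) (gap_bounded A R D d q L t a)"
    unfolding gap_bounded_def mu_plus_minus_mu_minus of_nat_le_iff[where 'a=real, symmetric]
    using Nplays_measurable[of "int t" t] Mobs_measurable by measurable
  then have "Measurable.pred M (gap_bounded A R D d q L t a)"
    by (rule measurable_F_M)
  then show ?thesis
    by (simp add: pred_def)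
qed

lemma prob_gap_bounded_ge:
  assumes q: "q \<le> 1" and L: "0 < L"
  shows "prob {w \<in> space M. \<forall>t\<in>{1..T}. \<forall>a\<in>{1..K}. gap_bounded A R D (delay_quantile M D a q) q L t a w}
    \<ge> 1 - real K * real T * exp (- L)"
proof -
  let ?good = "{w \<in> space M. \<forall>t\<in>{1..T}. \<forall>a\<in>{1..K}. gap_bounded A R D (delay_quantile M D a q) q L t a w}"
  have good: "?good \<in> events"
    using gap_bounded_in_events by (intro sets.sets_Collect_finite_All) auto
  have "space M - ?good \<subseteq> (\<Union>a\<in>{1..K}. \<Union>n\<in>{1..T}. hoeffding_event q L T a n)"
    using hoeffding_process_large_of_gap_violation[OF _ q L]
    by (fastforce simp: hoeffding_event_def)
  then have "prob (space M - ?good) \<le> prob (\<Union>a\<in>{1..K}. \<Union>n\<in>{1..T}. hoeffding_event q L T a n)"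
    by (intro finite_measure_mono) (auto intro: hoeffding_event_in_events)
  also have "\<dots> \<le> (\<Sum>a\<in>{1..K}. \<Sum>n\<in>{1..T}. prob (hoeffding_event q L T a n))"
    by (intro order_trans[OF measure_UNION_le] sum_mono measure_UNION_le)
       (auto intro: hoeffding_event_in_events)
  also have "\<dots> \<le> (\<Sum>a\<in>{1..K}. \<Sum>n\<in>{1..T}. exp (- L))"
    by (intro sum_mono prob_hoeffding_event_le q L) auto
  finally show ?thesis
    using prob_compl[OF good] by simp
qed

end

theorem mainTheorem10:
  fixes M :: "'w measure"
    and F :: "nat \<Rightarrow> 'w measure"
    and A :: "nat \<Rightarrow> 'w \<Rightarrow> nat set"
    and R :: "nat \<Rightarrow> nat \<Rightarrow> 'w \<Rightarrow> real"
    and D :: "nat \<Rightarrow> nat \<Rightarrow> 'w \<Rightarrow> enat"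
    and K L T :: nat and q \<delta> :: real
  assumes prob: "prob_space M"
    and F_space: "\<And>t. space (F t) = space M"
    and F_sub: "\<And>t. sets (F t) \<subseteq> sets M"
    and F_mono: "\<And>s t. s \<le> t \<Longrightarrow> sets (F s) \<subseteq> sets (F t)"
    and A_arms: "\<And>t w. 1 \<le> t \<Longrightarrow> w \<in> space M \<Longrightarrow> A t w \<subseteq> {1..K} \<and> card (A t w) = L"
    and A_meas: "\<And>t a. 1 \<le> t \<Longrightarrow> {w \<in> space M. a \<in> A t w} \<in> sets (F t)"
    and R_range: "\<And>t a w. 1 \<le> t \<Longrightarrow> w \<in> space M \<Longrightarrow> 0 \<le> R t a w \<and> R t a w \<le> 1"
    and RD_meas: "\<And>s t a. 1 \<le> s \<Longrightarrow> s < t \<Longrightarrow>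
        (\<lambda>w. (R s a w, D s a w)) \<in> measurable (F t) (borel \<Otimes>\<^sub>M count_space UNIV)"
    and RD_meas_M: "\<And>t a. 1 \<le> t \<Longrightarrow>
        (\<lambda>w. (R t a w, D t a w)) \<in> measurable M (borel \<Otimes>\<^sub>M count_space UNIV)"
    and RD_indep: "\<And>t a. 1 \<le> t \<Longrightarrow>
        prob_space.indep_set M (sets (F t))
          (sets (vimage_algebra (space M) (\<lambda>w. (R t a w, D t a w))
                   (borel \<Otimes>\<^sub>M count_space UNIV)))"
    and RD_ident: "\<And>t a. 1 \<le> t \<Longrightarrow>
        distr M (borel \<Otimes>\<^sub>M count_space UNIV) (\<lambda>w. (R t a w, D t a w))
        = distr M (borel \<Otimes>\<^sub>M count_space UNIV) (\<lambda>w. (R 1 a w, D 1 a w))"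
    and q_pos: "0 < q" and q_le: "q \<le> 1"
    and delta_pos: "0 < \<delta>" and delta_lt: "\<delta> < 1"
  shows "measure M {w \<in> space M. \<forall>t\<in>{1..T}. \<forall>a\<in>{1..K}.
           Nplays A (int t) a w \<ge> 1 \<longrightarrow>
             mu_plus A R D t a w - mu_minus A R D t a w
             \<le> (real (Nplays A (int t) a w)
                  - real (Nplays_shift A t (delay_quantile M D a q) a w))
                 / real (Nplays A (int t) a w)
               + 1 - q
               + sqrt (ln (3 * real K * real T / \<delta>) / (2 * real (Nplays A (int t) a w)))}
         \<ge> 1 - \<delta> / 3"
proof -
  (* The gap only involves play counts. *)
  interpret delayed_feedback_bandit M F A R D
    by (intro delayed_feedback_bandit.intro delayed_feedback_bandit_axioms.intro prob)
       (fact F_space F_sub F_mono A_meas RD_meas RD_meas_M RD_indep RD_ident)+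
  show ?thesis
  proof (cases "K = 0 \<or> T = 0")
    case True
    then show ?thesis
      using delta_pos by (auto simp: prob_space)
  next
    case False
    then have KT: "1 \<le> real K * real T"
      by (simp add: Suc_le_eq flip: of_nat_mult)
    define L' where "L' = ln (3 * real K * real T / \<delta>)"
    have "0 < L'"
      unfolding L'_def using KT delta_pos delta_lt by (simp add: field_simps)
    moreover have "real K * real T * exp (- L') = \<delta> / 3"
      unfolding L'_def using False KT delta_pos by (simp add: exp_minus field_simps)
    ultimately show ?thesis
      using prob_gap_bounded_ge[OF q_le, of L' K T] unfolding gap_bounded_def L'_def by simp
  qed
qed

end
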